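(* Let $a<b$, $c<d$ be real numbers and $C\in\mathbb{R}\setminus\{0\}$. Let $(p_n)_{n\in\mathbb{N}_0}$ and $(q_n)_{n\in\mathbb{N}_0}$ be real sequences with $p_0=q_0$ such that the power series $\sigma(s)=\sum_{n\ge 0}p_n(s-a)^n$ and $\tau(t)=\sum_{n\ge0}q_n(t-c)^n$ converge uniformly on $[a,b]$ and $[c,d]$ respectively. Let $k:[a,b]\times[c,d]\to\mathbb{R}$ be the solution of the Goursat problem $$\frac{\partial^2 k}{\partial s\,\partial t}=Ck \text{ on } [a,b]\times[c,d],\qquad k(s,c)=\sigma(s),\quad k(a,t)=\tau(t).$$ Then, writing $\Delta_{a,b}=b-a$ and $\Delta_{c,d}=d-c$, one has $k(s,d)=\sum_{n\ge0}\tilde p_n(s-a)^n$ for $s\in[a,b]$ and $k(b,t)=\sum_{n\ge0}\tilde q_n(t-c)^n$ for $t\in[c,d]$, where for all $n\in\mathbb{N}_0$ $$\tilde p_n=\sum_{k=0}^{n}p_k\frac{(C\Delta_{c,d})^{n-k}\,k!}{(n-k)!\,n!}+\sum_{k=1}^{\infty}q_k\frac{C^n\Delta_{c,d}^{\,n+k}\,k!}{(n+k)!\,n!},$$ $$\tilde q_n=\sum_{k=0}^{n}q_k\frac{(C\Delta_{a,b})^{n-k}\,k!}{(n-k)!\,n!}+\sum_{k=1}^{\infty}p_k\frac{C^n\Delta_{a,b}^{\,n+k}\,k!}{(n+k)!\,n!}.$$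
   Context: By the solution of the Goursat problem is meant the continuous function $k$ on $[a,b]\times[c,d]$ satisfying $k(s,t)=\sigma(s)+\tau(t)-\sigma(a)+C\int_a^s\int_c^t k(r,w)\,dw\,dr$ for all $(s,t)$ in the rectangle (equivalently, the classical solution given by the Riemann-function representation with $I_0$, the zero-order modified Bessel function of the first kind). *)

theory Defs
  imports "HOL-Analysis.Analysis"
begin

text \<open>Solution of the Goursat problem k_st = C k on [a,b] x [c,d], k(s,c) = sigma(s),
  k(a,t) = tau(t): the continuous function on the rectangle satisfying the
  integral equation k(s,t) = sigma(s) + tau(t) - sigma(a) + C int_a^s int_c^t k.\<close>
definition goursat_solution ::
  "real \<Rightarrow> real \<Rightarrow> real \<Rightarrow> real \<Rightarrow> real \<Rightarrow> (real \<Rightarrow> real) \<Rightarrow> (real \<Rightarrow> real)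
     \<Rightarrow> (real \<Rightarrow> real \<Rightarrow> real) \<Rightarrow> bool" where
  "goursat_solution a b c d C \<sigma> \<tau> k \<longleftrightarrow>
     continuous_on ({a..b} \<times> {c..d}) (\<lambda>x. k (fst x) (snd x)) \<and>
     (\<forall>s\<in>{a..b}. \<forall>t\<in>{c..d}.
        k s t = \<sigma> s + \<tau> t - \<sigma> a
                + C * integral {a..s} (\<lambda>r. integral {c..t} (\<lambda>w. k r w)))"

text \<open>The coefficient formula: for the side s=d use goursat_coeff C (d-c) p q,
  for the side t=b use goursat_coeff C (b-a) q p. The infinite sum runs over
  k >= 1, written with k = j+1.\<close>
definition goursat_coeff ::
  "real \<Rightarrow> real \<Rightarrow> (nat \<Rightarrow> real) \<Rightarrow> (nat \<Rightarrow> real) \<Rightarrow> nat \<Rightarrow> real" where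
  "goursat_coeff C \<Delta> p q n =
     (\<Sum>k\<le>n. p k * (C * \<Delta>) ^ (n - k) * fact k / (fact (n - k) * fact n))
     + (\<Sum>j. q (j + 1) * C ^ n * \<Delta> ^ (n + (j + 1)) * fact (j + 1)
              / (fact (n + (j + 1)) * fact n))"

end

theory Submission
  imports Defs
begin

text \<open>The integral equation says that k is a fixed point of k = g + C I k, where
  g s t = \<sigma> s + \<tau> t - \<sigma> a and I is integration over [a,s] x [c,t]. Iterating, k is the sum of
  its Neumann series, the sum of C^j I^j g over j, because the remainder after N terms is bounded by
  a constant times (|C| (s-a) (t-c))^N / N!^2. The terms are explicit: I^j g is made of the
  j-fold integrals of \<sigma> and \<tau> times (t-c)^j/j! and (s-a)^j/j!, and integrating the power
  series of \<sigma> and \<tau> termwise (legitimate by uniform convergence) expresses the j-fold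
  integrals as power series again. On the edge t = d the Neumann series thus becomes a double
  series in the powers of s - a; summing it along diagonals gives the coefficients of the
  claim. The rearrangement is justified because, the terms p m (b-a)^m being bounded,
  all rows but the first two are dominated by a product of two summable sequences.
  The edge s = b is symmetric.\<close>

section \<open>Diagonal summation of double series\<close>

lemma diagonal_sums_if_dominated:
  fixes G :: "nat \<Rightarrow> nat \<Rightarrow> real" and B c W :: "nat \<Rightarrow> real"
  assumes B: "summable B" "\<And>j. 0 \<le> B j" and c: "summable c" "\<And>m. 0 \<le> c m"
    and dominated: "\<And>j m. \<bar>G j m\<bar> \<le> B j * c m"
    and rows: "\<And>j. G j sums W j"
  shows "summable W" and "(\<lambda>n. \<Sum>i\<le>n. G i (n - i)) sums suminf W"
proof -
  have "(\<lambda>(j, m). B j * c m) summable_on UNIV"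
    unfolding UNIV_Times_UNIV[symmetric]
  proof (rule summable_on_SigmaI)
    show "((\<lambda>m. case (j, m) of (j, m) \<Rightarrow> B j * c m) has_sum B j * suminf c) UNIV" for j
      using B c by (auto intro!: sums_nonneg_imp_has_sum sums_mult summable_sums)
    show "(\<lambda>j. B j * suminf c) summable_on UNIV"
      using B c by (subst summable_on_UNIV_nonneg_real_iff)
        (auto intro: summable_mult2 suminf_nonneg mult_nonneg_nonneg)
  qed (use B c in auto)
  then have "(\<lambda>x. norm (case_prod G x)) summable_on UNIV"
    by (rule summable_on_comparison_test) (use dominated in auto)
  then obtain S where S: "(case_prod G has_sum S) UNIV"
    using abs_summable_summable summable_on_def by blast
  have "(W has_sum S) UNIV"
  proof (rule has_sum_SigmaD[where B = "\<lambda>_. UNIV"])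
    show "(case_prod G has_sum S) (UNIV \<times> UNIV)" using S by simp
    have "summable (\<lambda>m. norm (G j m))" for j
      by (rule summable_comparison_test'[where g = "\<lambda>m. B j * c m"])
         (use dominated c in \<open>auto intro: summable_mult\<close>)
    then show "((\<lambda>m. case_prod G (j, m)) has_sum W j) UNIV" for j
      using rows by (simp add: norm_summable_imp_has_sum)
  qed
  then have W: "W sums S" by (rule has_sum_imp_sums)
  then show "summable W" by (rule sums_summable)
  have "((\<lambda>(n, i). G i (n - i)) has_sum S) (SIGMA n:UNIV. {..n})"
    using S by (subst has_sum_reindex_bij_witness[where j = "\<lambda>(n, i). (i, n - i)"
        and i = "\<lambda>(i, m). (i + m, i)" and T = UNIV and h = "case_prod G" and s' = S]) auto
  then have "((\<lambda>n. \<Sum>i\<le>n. G i (n - i)) has_sum S) UNIV"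
    by (rule has_sum_SigmaD) auto
  then show "(\<lambda>n. \<Sum>i\<le>n. G i (n - i)) sums suminf W"
    using sums_unique[OF W] by (simp add: has_sum_imp_sums)
qed

lemma diagonal_sums_Suc_row:
  fixes G :: "nat \<Rightarrow> nat \<Rightarrow> 'a::real_normed_vector"
  assumes "G 0 sums W" and "(\<lambda>n. \<Sum>i\<le>n. G (Suc i) (n - i)) sums S"
  shows "(\<lambda>n. \<Sum>i\<le>n. G i (n - i)) sums (W + S)"
proof -
  have "(\<lambda>n. G 0 (Suc n) + (\<Sum>i\<le>n. G (Suc i) (n - i))) sums (W - G 0 0 + S)"
    using assms by (intro sums_add) (simp_all add: sums_Suc_iff)
  then have "(\<lambda>n. \<Sum>i\<le>Suc n. G i (Suc n - i)) sums (W - G 0 0 + S)"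
    unfolding sum.atMost_Suc_shift by simp
  then show ?thesis
    using sums_Suc_iff[of "\<lambda>n. \<Sum>i\<le>n. G i (n - i)" "W - G 0 0 + S"] by simp
qed

lemma fact_div_fact_le_inverse_square:
  "fact m / fact (m + j + 2) \<le> (1::real) / (real m + 1)\<^sup>2"
proof -
  have "fact m * (real m + 1)\<^sup>2 \<le> fact m * ((real m + 1) * (real m + 2))"
    by (simp add: power2_eq_square)
  also have "\<dots> = fact (m + 2)"
    by (simp add: fact_Suc numeral_2_eq_2 algebra_simps)
  also have "\<dots> \<le> fact (m + j + 2)"
    by (intro fact_mono) auto
  finally have "fact m / fact (m + j + 2) \<le> fact m / (fact m * (real m + 1)\<^sup>2)"
    by (intro divide_left_mono) auto
  then show ?thesis
    by simp
qed

lemma diagonal_sums_of_bounded: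
  fixes a :: "nat \<Rightarrow> real" and w M :: real
  assumes bounded: "\<And>m. \<bar>a m\<bar> \<le> M"
    and rows: "\<And>j. (\<lambda>m. a m * w ^ j * fact m / (fact j * fact (m + j))) sums V j"
  shows "summable V"
    and "(\<lambda>n. \<Sum>j\<le>n. a (n - j) * w ^ j * fact (n - j) / (fact j * fact n)) sums suminf V"
proof -
  define G where "G j m = a m * w ^ j * fact m / (fact j * fact (m + j))" for j m
  define B where "B j = M * (\<bar>w\<bar> ^ (j + 2) / fact (j + 2))" for j
  have M: "0 \<le> M" using bounded[of 0] by linarith
  have B: "summable B"
    using summable_ignore_initial_segment[OF summable_exp[of "\<bar>w\<bar>"], of 2]
    unfolding B_def by (intro summable_mult) (simp add: field_simps)
  \<comment> \<open>Rows 0 and 1 are in general only conditionally convergent, so only the later rows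
    can be dominated.\<close>
  have dominated: "\<bar>G (j + 2) m\<bar> \<le> B j * (1 / (real m + 1)\<^sup>2)" for j m
  proof -
    have "\<bar>G (j + 2) m\<bar> = \<bar>a m\<bar> * (\<bar>w\<bar> ^ (j + 2) / fact (j + 2)) * (fact m / fact (m + j + 2))"
      by (simp add: G_def abs_mult power_abs field_simps)
    also have "\<dots> \<le> M * (\<bar>w\<bar> ^ (j + 2) / fact (j + 2)) * (1 / (real m + 1)\<^sup>2)"
      by (intro mult_mono bounded fact_div_fact_le_inverse_square) (use M in auto)
    finally show ?thesis by (simp add: B_def)
  qed
  have inverse_squares: "summable (\<lambda>m. 1 / (real m + 1)\<^sup>2)"
    using sums_summable[OF inverse_squares_sums] by (simp add: add.commute)
  have G_rows: "G j sums V j" for j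
    unfolding G_def[abs_def] by (rule rows)
  have tail: "summable (\<lambda>j. V (Suc (Suc j)))"
    "(\<lambda>n. \<Sum>i\<le>n. G (Suc (Suc i)) (n - i)) sums (\<Sum>j. V (Suc (Suc j)))"
    using diagonal_sums_if_dominated[OF B _ inverse_squares _ dominated G_rows] M
    by (auto simp: B_def numeral_2_eq_2)
  have "(\<lambda>n. \<Sum>i\<le>n. G i (n - i)) sums (V 0 + (V (Suc 0) + (\<Sum>j. V (Suc (Suc j)))))"
    by (intro diagonal_sums_Suc_row G_rows tail(2))
  moreover have "V sums (V 0 + (V (Suc 0) + (\<Sum>j. V (Suc (Suc j)))))"
    using summable_sums[OF tail(1)]
    unfolding sums_Suc_iff[of "\<lambda>j. V (Suc j)"] sums_Suc_iff by (simp add: add_ac)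
  moreover have "G j (n - j) = a (n - j) * w ^ j * fact (n - j) / (fact j * fact n)"
    if "j \<le> n" for j n
    using that by (simp add: G_def)
  ultimately show "summable V"
    and "(\<lambda>n. \<Sum>j\<le>n. a (n - j) * w ^ j * fact (n - j) / (fact j * fact n)) sums suminf V"
    by (auto simp: sums_iff)
qed

lemma powser_diagonal_sums:
  fixes x w :: real and p J :: "nat \<Rightarrow> real"
  assumes J: "\<And>j. (\<lambda>m. p m * fact m / fact (m + j) * x ^ (m + j)) sums J j"
  shows "summable (\<lambda>j. w ^ j / fact j * J j)"
    and "(\<lambda>n. (\<Sum>k\<le>n. p k * w ^ (n - k) * fact k / (fact (n - k) * fact n)) * x ^ n)
           sums (\<Sum>j. w ^ j / fact j * J j)"
proof -
  define a where "a m = p m * x ^ m" for m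
  have "a sums J 0"
    using J[of 0] by (simp add: a_def[abs_def])
  then have "a \<longlonglongrightarrow> 0"
    by (rule summable_LIMSEQ_zero[OF sums_summable])
  then have "Bseq a"
    by (rule convergent_imp_Bseq[OF convergentI])
  then obtain M where bounded: "\<And>m. \<bar>a m\<bar> \<le> M"
    unfolding Bseq_def by auto
  have rows: "(\<lambda>m. a m * (w * x) ^ j * fact m / (fact j * fact (m + j)))
      sums (w ^ j / fact j * J j)" for j
    using sums_mult[OF J[of j], of "w ^ j / fact j"]
    by (simp add: a_def power_add power_mult_distrib field_simps)
  have diagonal: "(\<Sum>k\<le>n. p k * w ^ (n - k) * fact k / (fact (n - k) * fact n)) * x ^ n
      = (\<Sum>j\<le>n. a (n - j) * (w * x) ^ j * fact (n - j) / (fact j * fact n))" for n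
  proof -
    have "(\<Sum>k\<le>n. p k * w ^ (n - k) * fact k / (fact (n - k) * fact n)) * x ^ n
        = (\<Sum>k\<le>n. a k * (w * x) ^ (n - k) * fact k / (fact (n - k) * fact n))"
      unfolding sum_distrib_right
      by (intro sum.cong refl) (simp add: a_def power_mult_distrib power_add[symmetric])
    also have "\<dots> = (\<Sum>j\<le>n. a (n - j) * (w * x) ^ j * fact (n - j) / (fact j * fact n))"
      by (subst (1 2) atMost_atLeast0) (subst sum.atLeastAtMost_rev, intro sum.cong refl, auto)
    finally show ?thesis .
  qed
  show "summable (\<lambda>j. w ^ j / fact j * J j)"
    using diagonal_sums_of_bounded(1)[OF bounded rows] .
  show "(\<lambda>n. (\<Sum>k\<le>n. p k * w ^ (n - k) * fact k / (fact (n - k) * fact n)) * x ^ n)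
      sums (\<Sum>j. w ^ j / fact j * J j)"
    unfolding diagonal using diagonal_sums_of_bounded(2)[OF bounded rows] .
qed

lemma goursat_coeff_eq:
  fixes C D J :: real and p q :: "nat \<Rightarrow> real"
  assumes "(\<lambda>l. q l * fact l / fact (l + n) * D ^ (l + n)) sums J"
  shows "goursat_coeff C D p q n =
    (\<Sum>k\<le>n. p k * (C * D) ^ (n - k) * fact k / (fact (n - k) * fact n))
    + C ^ n / fact n * (J - q 0 * D ^ n / fact n)"
proof -
  have "(\<lambda>j. q (Suc j) * fact (Suc j) / fact (Suc j + n) * D ^ (Suc j + n))
      sums (J - q 0 * D ^ n / fact n)"
    using assms sums_Suc_iff[of "\<lambda>l. q l * fact l / fact (l + n) * D ^ (l + n)"] by simp
  from sums_mult[OF this, of "C ^ n / fact n"]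
  have "(\<lambda>j. q (j + 1) * C ^ n * D ^ (n + (j + 1)) * fact (j + 1) / (fact (n + (j + 1)) * fact n))
      sums (C ^ n / fact n * (J - q 0 * D ^ n / fact n))"
    by (simp add: field_simps add_ac)
  then show ?thesis
    unfolding goursat_coeff_def by (simp add: sums_iff)
qed

lemma goursat_coeff_powser_sums:
  fixes C D x K :: real and p q Jp Jq :: "nat \<Rightarrow> real"
  assumes "p 0 = q 0"
    and Jp: "\<And>j. (\<lambda>m. p m * fact m / fact (m + j) * x ^ (m + j)) sums Jp j"
    and Jq: "\<And>j. (\<lambda>l. q l * fact l / fact (l + j) * D ^ (l + j)) sums Jq j"
    and K: "(\<lambda>j. C ^ j * (Jp j * (D ^ j / fact j) + x ^ j / fact j * Jq j
                - p 0 * (x ^ j / fact j * (D ^ j / fact j)))) sums K"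
  shows "(\<lambda>n. goursat_coeff C D p q n * x ^ n) sums K"
proof -
  define V where "V j = (C * D) ^ j / fact j * Jp j" for j
  define R where "R n = C ^ n / fact n * (Jq n - q 0 * D ^ n / fact n) * x ^ n" for n
  note diagonal = powser_diagonal_sums[OF Jp, of "C * D"]
  have "C ^ j * (Jp j * (D ^ j / fact j) + x ^ j / fact j * Jq j
      - p 0 * (x ^ j / fact j * (D ^ j / fact j))) = V j + R j" for j
    using \<open>p 0 = q 0\<close> by (simp add: V_def R_def power_mult_distrib field_simps)
  with K have "(\<lambda>j. V j + R j) sums K"
    by simp
  from sums_diff[OF this summable_sums[OF diagonal(1)]]
  have "R sums (K - suminf V)"
    by (simp add: V_def[abs_def])
  from sums_add[OF diagonal(2) this] show ?thesis
    by (simp add: goursat_coeff_eq[OF Jq] V_def[abs_def] R_def algebra_simps)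
qed

section \<open>Iterated integrals of power series\<close>

primrec iterated_integral :: "real \<Rightarrow> (real \<Rightarrow> real) \<Rightarrow> nat \<Rightarrow> real \<Rightarrow> real" where
  "iterated_integral a f 0 = f"
| "iterated_integral a f (Suc j) = (\<lambda>s. integral {a..s} (iterated_integral a f j))"

lemma continuous_on_iterated_integral:
  "continuous_on {a..b} f \<Longrightarrow> continuous_on {a..b} (iterated_integral a f j)"
  by (induction j) (simp_all add: indefinite_integral_continuous_1 integrable_continuous_interval)

lemma has_integral_iterated_integral:
  assumes "continuous_on {a..b} f" and "s \<in> {a..b}"
  shows "(iterated_integral a f j has_integral iterated_integral a f (Suc j) s) {a..s}"
  using assms by (auto intro!: integrable_integral integrable_continuous_interval
      continuous_on_subset[OF continuous_on_iterated_integral])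

lemma has_integral_power_shifted:
  fixes a s :: real
  assumes "a \<le> s"
  shows "((\<lambda>r. (r - a) ^ j) has_integral (s - a) ^ Suc j / Suc j) {a..s}"
proof -
  have "((\<lambda>r. (r - a) ^ Suc j / Suc j) has_real_derivative (r - a) ^ j) (at r within {a..s})" for r
    using DERIV_cdivide[OF DERIV_power_Suc[OF DERIV_diff[OF DERIV_ident DERIV_const], where n = j],
        where c = "Suc j"]
    by simp
  then show ?thesis
    using fundamental_theorem_of_calculus[OF assms, of "\<lambda>r. (r - a) ^ Suc j / Suc j"]
    by (simp add: has_real_derivative_iff_has_vector_derivative)
qed

lemma has_integral_power_div_fact:
  fixes a s :: real
  assumes "a \<le> s"
  shows "((\<lambda>r. (r - a) ^ j / fact j) has_integral (s - a) ^ Suc j / fact (Suc j)) {a..s}"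
  using has_integral_divide[OF has_integral_power_shifted[OF assms], where c = "fact j"]
  by (simp add: fact_Suc mult.commute)

lemma uniform_limit_indefinite_integral:
  fixes f :: "nat \<Rightarrow> real \<Rightarrow> real"
  assumes "a \<le> b" and lim: "uniform_limit {a..b} f g sequentially"
    and cont: "\<And>n. continuous_on {a..b} (f n)"
  shows "uniform_limit {a..b} (\<lambda>n s. integral {a..s} (f n)) (\<lambda>s. integral {a..s} g) sequentially"
  unfolding uniform_limit_iff
proof (intro allI impI)
  fix e :: real
  assume "e > 0"
  define e' where "e' = e / (b - a + 1)"
  have "e' > 0"
    using \<open>e > 0\<close> \<open>a \<le> b\<close> by (simp add: e'_def)
  have g: "continuous_on {a..b} g"
    using uniform_limit_theorem[OF always_eventually[OF allI[OF cont]] lim] by simp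
  have "\<forall>\<^sub>F n in sequentially. \<forall>r\<in>{a..b}. dist (f n r) (g r) < e'"
    using lim \<open>e' > 0\<close> by (simp add: uniform_limit_iff)
  then show "\<forall>\<^sub>F n in sequentially. \<forall>s\<in>{a..b}. dist (integral {a..s} (f n)) (integral {a..s} g) < e"
  proof (rule eventually_mono, intro ballI)
    fix n s
    assume close: "\<forall>r\<in>{a..b}. dist (f n r) (g r) < e'" and s: "s \<in> {a..b}"
    have "f n integrable_on {a..s}" "g integrable_on {a..s}"
      using s by (auto intro!: integrable_continuous_interval continuous_on_subset[OF cont]
          continuous_on_subset[OF g])
    then have "dist (integral {a..s} (f n)) (integral {a..s} g)
        = norm (integral {a..s} (\<lambda>r. f n r - g r))"
      by (simp add: dist_norm integral_diff)
    also have "\<dots> \<le> integral {a..s} (\<lambda>_. e')"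
      using close s \<open>f n integrable_on {a..s}\<close> \<open>g integrable_on {a..s}\<close>
      by (intro integral_norm_bound_integral integrable_diff) (auto simp: dist_norm less_imp_le)
    also have "\<dots> \<le> e' * (b - a)"
      using s \<open>e' > 0\<close> by simp
    also have "\<dots> < e"
      using \<open>e > 0\<close> \<open>a \<le> b\<close> by (simp add: e'_def field_simps)
    finally show "dist (integral {a..s} (f n)) (integral {a..s} g) < e" .
  qed
qed

lemma uniform_limit_iterated_integral_powser:
  fixes p :: "nat \<Rightarrow> real"
  assumes "a \<le> b"
    and "uniform_limit {a..b} (\<lambda>N s. \<Sum>n<N. p n * (s - a) ^ n) \<sigma> sequentially"
  shows "uniform_limit {a..b} (\<lambda>N s. \<Sum>n<N. p n * fact n / fact (n + j) * (s - a) ^ (n + j))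
           (iterated_integral a \<sigma> j) sequentially"
proof (induction j)
  case 0
  then show ?case using assms(2) by simp
next
  case (Suc j)
  have "((\<lambda>s. \<Sum>n<N. p n * fact n / fact (n + j) * (s - a) ^ (n + j)) has_integral
      (\<Sum>n<N. p n * fact n / fact (n + Suc j) * (s - a) ^ (n + Suc j))) {a..s}"
    if "s \<in> {a..b}" for N s
  proof -
    have termwise: "p n * fact n / fact (n + j) * ((s - a) ^ Suc (n + j) / Suc (n + j))
        = p n * fact n / fact (n + Suc j) * (s - a) ^ (n + Suc j)" for n
      by (simp add: field_simps)
    have "((\<lambda>s. \<Sum>n<N. p n * fact n / fact (n + j) * (s - a) ^ (n + j)) has_integral
        (\<Sum>n<N. p n * fact n / fact (n + j) * ((s - a) ^ Suc (n + j) / Suc (n + j)))) {a..s}"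
      using that by (intro has_integral_sum has_integral_mult_right has_integral_power_shifted) auto
    then show ?thesis
      unfolding termwise .
  qed
  then have integral_eq:
    "integral {a..s} (\<lambda>s. \<Sum>n<N. p n * fact n / fact (n + j) * (s - a) ^ (n + j))
      = (\<Sum>n<N. p n * fact n / fact (n + Suc j) * (s - a) ^ (n + Suc j))" if "s \<in> {a..b}" for N s
    using that by (blast intro: integral_unique)
  have "uniform_limit {a..b}
      (\<lambda>N s. integral {a..s} (\<lambda>s. \<Sum>n<N. p n * fact n / fact (n + j) * (s - a) ^ (n + j)))
      (iterated_integral a \<sigma> (Suc j)) sequentially"
    using uniform_limit_indefinite_integral[OF assms(1) Suc] by (simp add: continuous_intros)
  then show ?case
    by (rule uniform_limit_cong'[THEN iffD1, rotated 2]) (erule integral_eq, rule refl)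
qed

lemma iterated_integral_powser_sums:
  fixes p :: "nat \<Rightarrow> real"
  assumes "a \<le> b" and "s \<in> {a..b}"
    and "uniform_limit {a..b} (\<lambda>N s. \<Sum>n<N. p n * (s - a) ^ n) \<sigma> sequentially"
  shows "(\<lambda>n. p n * fact n / fact (n + j) * (s - a) ^ (n + j)) sums iterated_integral a \<sigma> j s"
  unfolding sums_def
  using tendsto_uniform_limitI[OF uniform_limit_iterated_integral_powser[OF assms(1,3)] assms(2)] .

section \<open>Integrals over rectangles\<close>

definition rect_continuous :: "real \<Rightarrow> real \<Rightarrow> real \<Rightarrow> real \<Rightarrow> (real \<Rightarrow> real \<Rightarrow> real) \<Rightarrow> bool" where
  "rect_continuous a b c d f \<longleftrightarrow> continuous_on ({a..b} \<times> {c..d}) (\<lambda>x. f (fst x) (snd x))"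

definition rect_integral :: "real \<Rightarrow> real \<Rightarrow> (real \<Rightarrow> real \<Rightarrow> real) \<Rightarrow> real \<Rightarrow> real \<Rightarrow> real" where
  "rect_integral a c f s t = integral {a..s} (\<lambda>r. integral {c..t} (\<lambda>w. f r w))"

lemma rect_continuous_add:
  "rect_continuous a b c d f \<Longrightarrow> rect_continuous a b c d g \<Longrightarrow>
    rect_continuous a b c d (\<lambda>r w. f r w + g r w)"
  unfolding rect_continuous_def by (rule continuous_on_add)

lemma rect_continuous_diff:
  "rect_continuous a b c d f \<Longrightarrow> rect_continuous a b c d g \<Longrightarrow>
    rect_continuous a b c d (\<lambda>r w. f r w - g r w)"
  unfolding rect_continuous_def by (rule continuous_on_diff)

lemma rect_continuous_cmult:
  "rect_continuous a b c d f \<Longrightarrow> rect_continuous a b c d (\<lambda>r w. K * f r w)"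
  unfolding rect_continuous_def by (intro continuous_on_mult continuous_on_const)

lemma rect_continuous_sum:
  "(\<And>j. j \<in> A \<Longrightarrow> rect_continuous a b c d (f j)) \<Longrightarrow>
    rect_continuous a b c d (\<lambda>r w. \<Sum>j\<in>A. f j r w)"
  unfolding rect_continuous_def by (rule continuous_on_sum)

lemma rect_continuous_mult_separable:
  assumes "continuous_on {a..b} X" and "continuous_on {c..d} Y"
  shows "rect_continuous a b c d (\<lambda>r w. X r * Y w)"
  unfolding rect_continuous_def
  by (intro continuous_on_mult continuous_on_compose2[OF assms(1) continuous_on_fst]
      continuous_on_compose2[OF assms(2) continuous_on_snd]) auto

lemma integrable_on_rect_slice:
  assumes "rect_continuous a b c d f" and "r \<in> {a..b}" and "t \<in> {c..d}"
  shows "(\<lambda>w. f r w) integrable_on {c..t}"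
proof -
  have "continuous_on {c..d} (\<lambda>w. (\<lambda>x. f (fst x) (snd x)) (r, w))"
    by (rule continuous_on_compose2[OF assms(1)[unfolded rect_continuous_def]])
      (use assms(2) in \<open>auto intro!: continuous_intros\<close>)
  then have "continuous_on {c..d} (\<lambda>w. f r w)"
    by simp
  then show ?thesis
    by (rule integrable_continuous_interval[OF continuous_on_subset]) (use assms(3) in auto)
qed

lemma integrable_on_rect_inner_integral:
  assumes "rect_continuous a b c d f" and "s \<in> {a..b}" and "t \<in> {c..d}"
  shows "(\<lambda>r. integral {c..t} (\<lambda>w. f r w)) integrable_on {a..s}"
proof -
  have "continuous_on ({a..b} \<times> cbox c t) (\<lambda>x. f (fst x) (snd x))"
    by (rule continuous_on_subset[OF assms(1)[unfolded rect_continuous_def]]) (use assms(3) in auto)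
  then have "continuous_on ({a..b} \<times> cbox c t) (\<lambda>(r, w). f r w)"
    by (simp add: case_prod_beta')
  from integral_continuous_on_param[OF this]
  have "continuous_on {a..b} (\<lambda>r. integral {c..t} (\<lambda>w. f r w))"
    by simp
  then show ?thesis
    by (rule integrable_continuous_interval[OF continuous_on_subset]) (use assms(2) in auto)
qed

lemma rect_integral_add:
  assumes "rect_continuous a b c d f" and "rect_continuous a b c d g"
    and "s \<in> {a..b}" and "t \<in> {c..d}"
  shows "rect_integral a c (\<lambda>r w. f r w + g r w) s t = rect_integral a c f s t + rect_integral a c g s t"
proof -
  have "rect_integral a c (\<lambda>r w. f r w + g r w) s t
      = integral {a..s} (\<lambda>r. integral {c..t} (\<lambda>w. f r w) + integral {c..t} (\<lambda>w. g r w))"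
    unfolding rect_integral_def using assms
    by (intro integral_cong integral_add integrable_on_rect_slice[of a b c d]) auto
  also have "\<dots> = rect_integral a c f s t + rect_integral a c g s t"
    unfolding rect_integral_def using assms
    by (intro integral_add integrable_on_rect_inner_integral)
  finally show ?thesis .
qed

lemma rect_integral_diff:
  assumes "rect_continuous a b c d f" and "rect_continuous a b c d g"
    and "s \<in> {a..b}" and "t \<in> {c..d}"
  shows "rect_integral a c (\<lambda>r w. f r w - g r w) s t = rect_integral a c f s t - rect_integral a c g s t"
  using rect_integral_add[OF rect_continuous_diff[OF assms(1,2)] assms(2-4)] by simp

lemma rect_integral_sum:
  assumes "finite A" and "\<And>j. j \<in> A \<Longrightarrow> rect_continuous a b c d (f j)"
    and "s \<in> {a..b}" and "t \<in> {c..d}"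
  shows "rect_integral a c (\<lambda>r w. \<Sum>j\<in>A. f j r w) s t = (\<Sum>j\<in>A. rect_integral a c (f j) s t)"
  using assms(1,2)
proof (induction A rule: finite_induct)
  case empty
  then show ?case by (simp add: rect_integral_def)
next
  case (insert i A)
  then show ?case
    using rect_integral_add[OF _ rect_continuous_sum assms(3,4), of "f i" A f] by simp
qed

lemma rect_integral_power_bound:
  assumes f: "rect_continuous a b c d f" and s: "s \<in> {a..b}" and t: "t \<in> {c..d}"
    and bound: "\<And>r w. r \<in> {a..b} \<Longrightarrow> w \<in> {c..d} \<Longrightarrow> \<bar>f r w\<bar> \<le> K * ((r - a) ^ n * (w - c) ^ n)"
  shows "\<bar>rect_integral a c f s t\<bar> \<le> K * ((s - a) ^ Suc n * (t - c) ^ Suc n) / (Suc n)\<^sup>2"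
proof -
  have inner: "((\<lambda>w. K * (r - a) ^ n * (w - c) ^ n) has_integral
      K * (r - a) ^ n * ((t - c) ^ Suc n / Suc n)) {c..t}" for r
    using t by (intro has_integral_mult_right has_integral_power_shifted) auto
  have outer: "((\<lambda>r. K * ((t - c) ^ Suc n / Suc n) * (r - a) ^ n) has_integral
      K * ((t - c) ^ Suc n / Suc n) * ((s - a) ^ Suc n / Suc n)) {a..s}"
    using s by (intro has_integral_mult_right has_integral_power_shifted) auto
  have "\<bar>integral {c..t} (\<lambda>w. f r w)\<bar> \<le> K * ((t - c) ^ Suc n / Suc n) * (r - a) ^ n"
    if "r \<in> {a..s}" for r
  proof -
    have r: "r \<in> {a..b}"
      using that s by auto
    have "norm (integral {c..t} (\<lambda>w. f r w)) \<le> integral {c..t} (\<lambda>w. K * (r - a) ^ n * (w - c) ^ n)"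
      by (rule integral_norm_bound_integral[OF integrable_on_rect_slice[OF f r t]])
        (use inner bound r t in \<open>auto simp: mult.assoc\<close>)
    then show ?thesis
      unfolding integral_unique[OF inner] by (simp add: mult_ac)
  qed
  then have "norm (rect_integral a c f s t) \<le> integral {a..s} (\<lambda>r. K * ((t - c) ^ Suc n / Suc n) * (r - a) ^ n)"
    unfolding rect_integral_def
    by (intro integral_norm_bound_integral[OF integrable_on_rect_inner_integral[OF f s t]])
      (use outer in auto)
  then show ?thesis
    unfolding integral_unique[OF outer] by (simp add: power2_eq_square field_simps)
qed

section \<open>The Neumann series of the Goursat problem\<close>

text \<open>The term C^j I^j g of the Neumann series, for g s t = \<sigma> s + \<tau> t - \<sigma> a.\<close>
definition neumann_term ::
  "real \<Rightarrow> real \<Rightarrow> real \<Rightarrow> (real \<Rightarrow> real) \<Rightarrow> (real \<Rightarrow> real) \<Rightarrow> nat \<Rightarrow> real \<Rightarrow> real \<Rightarrow> real" where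
  "neumann_term a c C \<sigma> \<tau> j s t = C ^ j *
     (iterated_integral a \<sigma> j s * ((t - c) ^ j / fact j) + (s - a) ^ j / fact j * iterated_integral c \<tau> j t
      - \<sigma> a * ((s - a) ^ j / fact j * ((t - c) ^ j / fact j)))"

lemma rect_continuous_neumann_term:
  assumes "continuous_on {a..b} \<sigma>" and "continuous_on {c..d} \<tau>"
  shows "rect_continuous a b c d (neumann_term a c C \<sigma> \<tau> j)"
  unfolding neumann_term_def[abs_def]
  by (intro rect_continuous_cmult rect_continuous_add rect_continuous_diff rect_continuous_mult_separable
      continuous_on_iterated_integral assms continuous_intros) auto

lemma rect_integral_neumann_term:
  assumes \<sigma>: "continuous_on {a..b} \<sigma>" and \<tau>: "continuous_on {c..d} \<tau>"
    and s: "s \<in> {a..b}" and t: "t \<in> {c..d}"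
  shows "C * rect_integral a c (neumann_term a c C \<sigma> \<tau> j) s t = neumann_term a c C \<sigma> \<tau> (Suc j) s t"
proof -
  let ?J\<sigma> = "iterated_integral a \<sigma>" and ?J\<tau> = "iterated_integral c \<tau>"
  let ?P = "\<lambda>x j. x ^ j / fact j"
  have inner: "((\<lambda>w. neumann_term a c C \<sigma> \<tau> j r w) has_integral C ^ j *
      (?J\<sigma> j r * ?P (t - c) (Suc j) + ?P (r - a) j * ?J\<tau> (Suc j) t
       - \<sigma> a * (?P (r - a) j * ?P (t - c) (Suc j)))) {c..t}" for r
    unfolding neumann_term_def using t
    by (intro has_integral_mult_right has_integral_add has_integral_diff
        has_integral_power_div_fact has_integral_iterated_integral[OF \<tau>]) auto
  have outer: "((\<lambda>r. C ^ j * (?J\<sigma> j r * ?P (t - c) (Suc j) + ?P (r - a) j * ?J\<tau> (Suc j) t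
       - \<sigma> a * (?P (r - a) j * ?P (t - c) (Suc j)))) has_integral C ^ j *
      (?J\<sigma> (Suc j) s * ?P (t - c) (Suc j) + ?P (s - a) (Suc j) * ?J\<tau> (Suc j) t
       - \<sigma> a * (?P (s - a) (Suc j) * ?P (t - c) (Suc j)))) {a..s}"
    using s
    by (intro has_integral_mult_right has_integral_mult_left has_integral_add has_integral_diff
        has_integral_power_div_fact has_integral_iterated_integral[OF \<sigma>]) auto
  show ?thesis
    unfolding rect_integral_def integral_unique[OF inner] integral_unique[OF outer]
    by (simp add: neumann_term_def)
qed

lemma goursat_neumann_remainder:
  assumes \<sigma>: "continuous_on {a..b} \<sigma>" and \<tau>: "continuous_on {c..d} \<tau>"
    and k: "goursat_solution a b c d C \<sigma> \<tau> k"
    and s: "s \<in> {a..b}" and t: "t \<in> {c..d}"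
  shows "k s t - (\<Sum>j<Suc N. neumann_term a c C \<sigma> \<tau> j s t)
    = C * rect_integral a c (\<lambda>r w. k r w - (\<Sum>j<N. neumann_term a c C \<sigma> \<tau> j r w)) s t"
proof -
  let ?G = "neumann_term a c C \<sigma> \<tau>"
  have k_cont: "rect_continuous a b c d k"
    using k by (simp add: goursat_solution_def rect_continuous_def)
  have G_cont: "rect_continuous a b c d (?G j)" for j
    by (rule rect_continuous_neumann_term[OF \<sigma> \<tau>])
  have "k s t = ?G 0 s t + C * rect_integral a c k s t"
    using k s t by (simp add: goursat_solution_def neumann_term_def rect_integral_def)
  moreover have "C * rect_integral a c (\<lambda>r w. k r w - (\<Sum>j<N. ?G j r w)) s t
      = C * rect_integral a c k s t - (\<Sum>j<N. C * rect_integral a c (?G j) s t)"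
    by (simp add: rect_integral_diff[OF k_cont rect_continuous_sum[OF G_cont] s t]
        rect_integral_sum[OF _ G_cont s t] right_diff_distrib sum_distrib_left)
  ultimately show ?thesis
    unfolding sum.lessThan_Suc_shift by (simp add: rect_integral_neumann_term[OF \<sigma> \<tau> s t])
qed

lemma goursat_neumann_remainder_bound:
  assumes \<sigma>: "continuous_on {a..b} \<sigma>" and \<tau>: "continuous_on {c..d} \<tau>"
    and k: "goursat_solution a b c d C \<sigma> \<tau> k"
    and M: "\<And>r w. r \<in> {a..b} \<Longrightarrow> w \<in> {c..d} \<Longrightarrow> \<bar>k r w\<bar> \<le> M"
    and s: "s \<in> {a..b}" and t: "t \<in> {c..d}"
  shows "\<bar>k s t - (\<Sum>j<N. neumann_term a c C \<sigma> \<tau> j s t)\<bar>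
    \<le> M * \<bar>C\<bar> ^ N / (fact N)\<^sup>2 * ((s - a) ^ N * (t - c) ^ N)"
  using s t
proof (induction N arbitrary: s t)
  case 0
  then show ?case using M by simp
next
  case (Suc N)
  let ?E = "\<lambda>r w. k r w - (\<Sum>j<N. neumann_term a c C \<sigma> \<tau> j r w)"
  have E_cont: "rect_continuous a b c d ?E"
    using k by (intro rect_continuous_diff rect_continuous_sum rect_continuous_neumann_term[OF \<sigma> \<tau>])
      (simp add: goursat_solution_def rect_continuous_def)
  have "\<bar>k s t - (\<Sum>j<Suc N. neumann_term a c C \<sigma> \<tau> j s t)\<bar> = \<bar>C\<bar> * \<bar>rect_integral a c ?E s t\<bar>"
    using goursat_neumann_remainder[OF \<sigma> \<tau> k Suc.prems] by (simp add: abs_mult)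
  also have "\<dots> \<le> \<bar>C\<bar> * (M * \<bar>C\<bar> ^ N / (fact N)\<^sup>2 * ((s - a) ^ Suc N * (t - c) ^ Suc N) / (Suc N)\<^sup>2)"
    by (intro mult_left_mono rect_integral_power_bound[OF E_cont Suc.prems] Suc.IH) auto
  also have "\<dots> = M * \<bar>C\<bar> ^ Suc N / (fact (Suc N))\<^sup>2 * ((s - a) ^ Suc N * (t - c) ^ Suc N)"
    by (simp add: power2_eq_square field_simps)
  finally show ?case .
qed

lemma goursat_solution_neumann_sums:
  assumes \<sigma>: "continuous_on {a..b} \<sigma>" and \<tau>: "continuous_on {c..d} \<tau>"
    and k: "goursat_solution a b c d C \<sigma> \<tau> k"
    and s: "s \<in> {a..b}" and t: "t \<in> {c..d}"
  shows "(\<lambda>j. neumann_term a c C \<sigma> \<tau> j s t) sums k s t"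
proof -
  have k_cont: "continuous_on ({a..b} \<times> {c..d}) (\<lambda>x. k (fst x) (snd x))"
    using k by (simp add: goursat_solution_def)
  then obtain M where M: "\<And>r w. r \<in> {a..b} \<Longrightarrow> w \<in> {c..d} \<Longrightarrow> \<bar>k r w\<bar> \<le> M"
    using compact_imp_bounded[OF compact_continuous_image[OF k_cont compact_Times]]
    by (force simp: bounded_iff)
  have M_nonneg: "0 \<le> M"
    using M[OF s t] by linarith
  define z where "z = \<bar>C\<bar> * (s - a) * (t - c)"
  have z_nonneg: "0 \<le> z"
    using s t by (simp add: z_def)
  have "norm (k s t - (\<Sum>j<N. neumann_term a c C \<sigma> \<tau> j s t)) \<le> M * (inverse (fact N) * z ^ N)" for N
  proof -
    have "\<bar>k s t - (\<Sum>j<N. neumann_term a c C \<sigma> \<tau> j s t)\<bar>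
        \<le> M * \<bar>C\<bar> ^ N / (fact N)\<^sup>2 * ((s - a) ^ N * (t - c) ^ N)"
      by (rule goursat_neumann_remainder_bound[OF \<sigma> \<tau> k M s t])
    also have "\<dots> = M * z ^ N / (fact N)\<^sup>2"
      unfolding z_def by (simp only: power_mult_distrib times_divide_eq_left mult.assoc)
    also have "\<dots> \<le> M * z ^ N / fact N"
    proof (rule frac_le)
      show "fact N \<le> (fact N :: real)\<^sup>2"
        using fact_ge_1[of N, where 'a = real] by (simp add: power2_eq_square)
    qed (use M_nonneg z_nonneg in auto)
    also have "\<dots> = M * (inverse (fact N) * z ^ N)"
      by (simp only: divide_inverse mult.assoc mult.commute[of "inverse (fact N)"])
    finally show ?thesis
      by simp
  qed
  moreover have "(\<lambda>N. M * (inverse (fact N) * z ^ N)) \<longlonglongrightarrow> 0"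
    by (rule tendsto_mult_right_zero[OF summable_LIMSEQ_zero[OF summable_exp]])
  ultimately have "(\<lambda>N. k s t - (\<Sum>j<N. neumann_term a c C \<sigma> \<tau> j s t)) \<longlonglongrightarrow> 0"
    by (rule Lim_null_comparison[OF always_eventually[OF allI]])
  then have "(\<lambda>N. k s t - (k s t - (\<Sum>j<N. neumann_term a c C \<sigma> \<tau> j s t))) \<longlonglongrightarrow> k s t - 0"
    by (intro tendsto_diff tendsto_const)
  then show ?thesis
    by (simp add: sums_def)
qed

theorem mainTheorem1:
  fixes a b c d C :: real and p q :: "nat \<Rightarrow> real"
    and \<sigma> \<tau> :: "real \<Rightarrow> real" and k :: "real \<Rightarrow> real \<Rightarrow> real"
  assumes "a < b" and "c < d" and "C \<noteq> 0"
    and "p 0 = q 0"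
    and "uniform_limit {a..b} (\<lambda>N s. \<Sum>n<N. p n * (s - a) ^ n) \<sigma> sequentially"
    and "uniform_limit {c..d} (\<lambda>N t. \<Sum>n<N. q n * (t - c) ^ n) \<tau> sequentially"
    and "goursat_solution a b c d C \<sigma> \<tau> k"
  shows "(\<forall>s\<in>{a..b}. (\<lambda>n. goursat_coeff C (d - c) p q n * (s - a) ^ n) sums k s d) \<and>
         (\<forall>t\<in>{c..d}. (\<lambda>n. goursat_coeff C (b - a) q p n * (t - c) ^ n) sums k b t)"
proof -
  have \<sigma>: "continuous_on {a..b} \<sigma>"
    by (rule uniform_limit_theorem[OF always_eventually assms(5)]) (auto intro!: continuous_intros)
  have \<tau>: "continuous_on {c..d} \<tau>"
    by (rule uniform_limit_theorem[OF always_eventually assms(6)]) (auto intro!: continuous_intros)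
  have J\<sigma>: "(\<lambda>m. p m * fact m / fact (m + j) * (s - a) ^ (m + j)) sums iterated_integral a \<sigma> j s"
    if "s \<in> {a..b}" for j s
    using iterated_integral_powser_sums[OF _ that assms(5)] \<open>a < b\<close> by simp
  have J\<tau>: "(\<lambda>m. q m * fact m / fact (m + j) * (t - c) ^ (m + j)) sums iterated_integral c \<tau> j t"
    if "t \<in> {c..d}" for j t
    using iterated_integral_powser_sums[OF _ that assms(6)] \<open>c < d\<close> by simp
  have "\<sigma> a = p 0"
    using J\<sigma>[of a 0] powser_sums_zero[of p] \<open>a < b\<close> by (simp add: sums_unique2)
  then have neumann: "(\<lambda>j. C ^ j * (iterated_integral a \<sigma> j s * ((t - c) ^ j / fact j)
      + (s - a) ^ j / fact j * iterated_integral c \<tau> j t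
      - p 0 * ((s - a) ^ j / fact j * ((t - c) ^ j / fact j)))) sums k s t"
    if "s \<in> {a..b}" "t \<in> {c..d}" for s t
    using goursat_solution_neumann_sums[OF \<sigma> \<tau> assms(7) that] by (simp add: neumann_term_def)
  have "(\<lambda>n. goursat_coeff C (d - c) p q n * (s - a) ^ n) sums k s d" if "s \<in> {a..b}" for s
    using \<open>c < d\<close>
    by (intro goursat_coeff_powser_sums[OF \<open>p 0 = q 0\<close> J\<sigma>[OF that] J\<tau> neumann[OF that]]) auto
  moreover have "(\<lambda>n. goursat_coeff C (b - a) q p n * (t - c) ^ n) sums k b t" if "t \<in> {c..d}" for t
    using \<open>a < b\<close> neumann[OF _ that, of b] \<open>p 0 = q 0\<close>
    by (intro goursat_coeff_powser_sums[OF \<open>p 0 = q 0\<close>[symmetric] J\<tau>[OF that] J\<sigma>])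
      (auto simp: ac_simps)
  ultimately show ?thesis
    by blast
qed

end
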